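(* Let $e_1,e_2,e_3,f_1,f_2,f_3$ be a coframe on a 6-manifold with $de_1=-2e_2\wedge e_3$, $df_1=-2f_2\wedge f_3$ and cyclically. For a parameter $t$ put $c_k=\cos(t+2\pi(k-1)/3)$, $s_k=\sin(t+2\pi(k-1)/3)$, and for constants $\lambda\neq0$, $a$, $b$ define \[X_{2k-1}=\lambda f_k+\lambda(ac_k+b)e_k,\qquad X_{2k}=4s_ke_k\qquad(k=1,2,3),\] $\xi=X_{12}+X_{34}+X_{56}$ and $\Xi=(X_1+iX_2)\wedge(X_3+iX_4)\wedge(X_5+iX_6)$ (here $X_{ab}=X_a\wedge X_b$, and $d$ is the exterior derivative on the 6-manifold, $t$ held fixed). Then there is a constant $\mu$ such that $d(\mathrm{Re}\,\Xi)=\frac{\mu}{2}\,\xi\wedge\xi$ holds for all $t$ if and only if either (i) $(a,b)=(0,-1)$ or $(0,0)$, in which case $\mu=-2/\lambda$; or (ii) $(a,b)=(\pm2,1)$, in which case $\mu=-\frac{\lambda^2+4}{2\lambda}$.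
   Context: The condition $d(\mathrm{Re}\,\Xi)=\frac\mu2\xi\wedge\xi$ is the nearly-half-flat condition for the $SU(3)$-structure $(\xi,\Xi)$ on the 6-dimensional orbits. *)

theory Defs
  imports Complex_Main
begin

text \<open>Basis 1-forms are indexed by 0..5: e_1,e_2,e_3 are 0,1,2 and f_1,f_2,f_3 are 3,4,5.
  A form is given by its coefficient function on index sets I (the coefficient of
  the wedge of the basis 1-forms in I, taken in increasing order).\<close>

type_synonym 'a form = "nat set \<Rightarrow> 'a"

definition form_add :: "'a::comm_ring_1 form \<Rightarrow> 'a form \<Rightarrow> 'a form" where
  "form_add \<alpha> \<beta> = (\<lambda>I. \<alpha> I + \<beta> I)"

definition form_diff :: "'a::comm_ring_1 form \<Rightarrow> 'a form \<Rightarrow> 'a form" where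
  "form_diff \<alpha> \<beta> = (\<lambda>I. \<alpha> I - \<beta> I)"

definition form_scale :: "'a::comm_ring_1 \<Rightarrow> 'a form \<Rightarrow> 'a form" where
  "form_scale c \<alpha> = (\<lambda>I. c * \<alpha> I)"

definition form_zero :: "'a::comm_ring_1 form" where
  "form_zero = (\<lambda>I. 0)"

definition form_unit :: "'a::comm_ring_1 form" where
  "form_unit = (\<lambda>I. if I = {} then 1 else 0)"

definition basis1 :: "nat \<Rightarrow> 'a::comm_ring_1 form" where
  "basis1 i = (\<lambda>I. if I = {i} then 1 else 0)"

text \<open>Sign of merging the increasing sequences I and J: number of inversions.\<close>
definition inv_count :: "nat set \<Rightarrow> nat set \<Rightarrow> nat" where
  "inv_count I J = card {(i, j). i \<in> I \<and> j \<in> J \<and> j < i}"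

definition wedge :: "'a::comm_ring_1 form \<Rightarrow> 'a form \<Rightarrow> 'a form" where
  "wedge \<alpha> \<beta> = (\<lambda>K. if finite K
      then (\<Sum>I\<in>Pow K. (-1) ^ inv_count I (K - I) * \<alpha> I * \<beta> (K - I))
      else 0)"

definition dgen :: "nat \<Rightarrow> 'a::comm_ring_1 form" where
  "dgen i = (if i = 0 then form_scale (-2) (wedge (basis1 1) (basis1 2))
        else if i = 1 then form_scale (-2) (wedge (basis1 2) (basis1 0))
        else if i = 2 then form_scale (-2) (wedge (basis1 0) (basis1 1))
        else if i = 3 then form_scale (-2) (wedge (basis1 4) (basis1 5))
        else if i = 4 then form_scale (-2) (wedge (basis1 5) (basis1 3))
        else if i = 5 then form_scale (-2) (wedge (basis1 3) (basis1 4))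
        else form_zero)"

fun mono :: "nat list \<Rightarrow> 'a::comm_ring_1 form" where
  "mono [] = form_unit"
| "mono (i # is) = wedge (basis1 i) (mono is)"

text \<open>Exterior derivative of a wedge of basis 1-forms (Leibniz rule).\<close>
fun dmono :: "nat list \<Rightarrow> 'a::comm_ring_1 form" where
  "dmono [] = form_zero"
| "dmono (i # is) = form_diff (wedge (dgen i) (mono is)) (wedge (basis1 i) (dmono is))"

definition ext_d :: "'a::comm_ring_1 form \<Rightarrow> 'a form" where
  "ext_d \<alpha> = (\<lambda>K. \<Sum>I\<in>Pow {0..<6}. \<alpha> I * dmono (sorted_list_of_set I) K)"

definition e_k :: "nat \<Rightarrow> 'a::comm_ring_1 form" where
  "e_k k = basis1 (k - 1)"

definition f_k :: "nat \<Rightarrow> 'a::comm_ring_1 form" where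
  "f_k k = basis1 (k + 2)"

definition ck :: "real \<Rightarrow> nat \<Rightarrow> real" where
  "ck t k = cos (t + 2 * pi * (real k - 1) / 3)"

definition sk :: "real \<Rightarrow> nat \<Rightarrow> real" where
  "sk t k = sin (t + 2 * pi * (real k - 1) / 3)"

definition X_odd :: "real \<Rightarrow> real \<Rightarrow> real \<Rightarrow> real \<Rightarrow> nat \<Rightarrow> real form" where
  "X_odd lam a b t k = form_add (form_scale lam (f_k k))
                                (form_scale (lam * (a * ck t k + b)) (e_k k))"

definition X_even :: "real \<Rightarrow> nat \<Rightarrow> real form" where
  "X_even t k = form_scale (4 * sk t k) (e_k k)"

definition xi :: "real \<Rightarrow> real \<Rightarrow> real \<Rightarrow> real \<Rightarrow> real form" where
  "xi lam a b t = form_add (wedge (X_odd lam a b t 1) (X_even t 1))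
                   (form_add (wedge (X_odd lam a b t 2) (X_even t 2))
                             (wedge (X_odd lam a b t 3) (X_even t 3)))"

definition complexify :: "real form \<Rightarrow> complex form" where
  "complexify \<alpha> = (\<lambda>I. complex_of_real (\<alpha> I))"

definition Zk :: "real \<Rightarrow> real \<Rightarrow> real \<Rightarrow> real \<Rightarrow> nat \<Rightarrow> complex form" where
  "Zk lam a b t k = form_add (complexify (X_odd lam a b t k))
                             (form_scale \<i> (complexify (X_even t k)))"

definition Xi :: "real \<Rightarrow> real \<Rightarrow> real \<Rightarrow> real \<Rightarrow> complex form" where
  "Xi lam a b t = wedge (Zk lam a b t 1) (wedge (Zk lam a b t 2) (Zk lam a b t 3))"

definition Re_form :: "complex form \<Rightarrow> real form" where
  "Re_form \<alpha> = (\<lambda>I. Re (\<alpha> I))"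

end

theory Submission
  imports Defs
begin

text \<open>Write \<open>\<theta>\<^sub>k = t + 2\<pi>(k-1)/3\<close>. Since \<open>e\<^sub>k \<and> e\<^sub>k = 0\<close>, the form \<open>\<xi>\<close> is
  \<open>4\<lambda> \<Sum>\<^sub>k s\<^sub>k f\<^sub>k \<and> e\<^sub>k\<close>, so \<open>\<xi> \<and> \<xi>\<close> only has the components \<open>e\<^sub>i f\<^sub>i e\<^sub>j f\<^sub>j\<close>, with
  coefficients proportional to \<open>s\<^sub>i s\<^sub>j\<close>; expanding \<open>d(Re \<Xi>)\<close> shows that its other
  components vanish as well, so the equation reduces to three scalar equations, one for each
  pair \<open>{i, j}\<close>. Let \<open>m\<close> be the third index. As \<open>\<theta>\<^sub>i, \<theta>\<^sub>j\<close> are \<open>\<theta>\<^sub>m + 2\<pi>/3, \<theta>\<^sub>m + 4\<pi>/3\<close>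
  modulo \<open>2\<pi>\<close>, the quantities \<open>c\<^sub>i + c\<^sub>j\<close>, \<open>c\<^sub>i c\<^sub>j\<close> and \<open>s\<^sub>i s\<^sub>j\<close> are polynomials in \<open>c\<^sub>m\<close>,
  and each scalar equation becomes the vanishing of one and the same quadratic polynomial at
  \<open>c\<^sub>m\<close>. As \<open>c\<^sub>1 = cos t\<close> takes the values \<open>-1, 0, 1\<close>, the equation holds for all \<open>t\<close> iff
  the three coefficients of that quadratic vanish, which is a small polynomial system in
  \<open>a, b, \<mu>\<close>.\<close>

text \<open>Finite lists of terms \<open>(xs, c)\<close>, standing for \<open>c\<close> times the wedge of the basis
  1-forms indexed by \<open>xs\<close>: on these, wedge products, \<open>d\<close> and the comparison of
  coefficients can be evaluated by rewriting.\<close>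
definition form_of_terms :: "(nat list \<times> 'a::comm_ring_1) list \<Rightarrow> 'a form" where
  "form_of_terms L = (\<lambda>K. sum_list (map (\<lambda>(xs, c). if set xs = K then c else 0) L))"

definition merge_sign :: "nat list \<Rightarrow> nat list \<Rightarrow> 'a::comm_ring_1" where
  "merge_sign xs ys = (-1) ^ length (filter (\<lambda>(i, j). j < i) (List.product xs ys))"

definition wedge_term ::
    "nat list \<Rightarrow> 'a::comm_ring_1 \<Rightarrow> nat list \<Rightarrow> 'a \<Rightarrow> (nat list \<times> 'a) list" where
  "wedge_term xs c ys d =
     (if \<forall>i\<in>set xs. i \<notin> set ys then [(sort (xs @ ys), merge_sign xs ys * c * d)] else [])"

definition wedge_terms ::
    "(nat list \<times> 'a::comm_ring_1) list \<Rightarrow> (nat list \<times> 'a) list \<Rightarrow> (nat list \<times> 'a) list" where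
  "wedge_terms L1 L2 =
     concat (map (\<lambda>(xs, c). concat (map (\<lambda>(ys, d). wedge_term xs c ys d) L2)) L1)"

definition term_coeff :: "(nat list \<times> 'a::comm_ring_1) list \<Rightarrow> nat list \<Rightarrow> 'a" where
  "term_coeff L ks = sum_list (map (\<lambda>(xs, c). if xs = ks then c else 0) L)"

lemma inv_count_set:
  assumes "distinct xs" "distinct ys"
  shows "inv_count (set xs) (set ys) = length (filter (\<lambda>(i, j). j < i) (List.product xs ys))"
proof -
  have "{(i, j). i \<in> set xs \<and> j \<in> set ys \<and> j < i}
      = set (filter (\<lambda>(i, j). j < i) (List.product xs ys))"
    by auto
  moreover have "distinct (filter (\<lambda>(i, j). j < i) (List.product xs ys))"
    using assms by (simp add: distinct_product)
  ultimately show ?thesis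
    unfolding inv_count_def by (metis distinct_card)
qed

lemma form_of_terms_Nil: "form_of_terms [] = form_zero"
  by (simp add: form_of_terms_def form_zero_def)

lemma form_of_terms_append:
  "form_of_terms (A @ B) = form_add (form_of_terms A) (form_of_terms B)"
  by (auto simp: form_of_terms_def form_add_def)

lemma form_of_terms_Cons:
  "form_of_terms (p # L) = form_add (form_of_terms [p]) (form_of_terms L)"
  using form_of_terms_append[of "[p]" L] by simp

lemma wedge_form_add_left: "wedge (form_add \<alpha> \<beta>) \<gamma> = form_add (wedge \<alpha> \<gamma>) (wedge \<beta> \<gamma>)"
  by (simp add: wedge_def form_add_def fun_eq_iff distrib_left distrib_right sum.distrib)

lemma wedge_form_add_right: "wedge \<gamma> (form_add \<alpha> \<beta>) = form_add (wedge \<gamma> \<alpha>) (wedge \<gamma> \<beta>)"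
  by (simp add: wedge_def form_add_def fun_eq_iff distrib_left distrib_right sum.distrib)

lemma wedge_form_zero_left: "wedge form_zero \<gamma> = form_zero"
  by (auto simp: wedge_def form_zero_def)

lemma wedge_form_zero_right: "wedge \<gamma> form_zero = form_zero"
  by (auto simp: wedge_def form_zero_def)

lemma wedge_single_terms:
  assumes "distinct xs" "distinct ys"
  shows "wedge (form_of_terms [(xs, c)]) (form_of_terms [(ys, d)])
       = form_of_terms (wedge_term xs c ys d)"
proof
  fix K
  show "wedge (form_of_terms [(xs, c)]) (form_of_terms [(ys, d)]) K
      = form_of_terms (wedge_term xs c ys d) K"
  proof (cases "finite K")
    case False
    then show ?thesis
      by (auto simp: wedge_def form_of_terms_def wedge_term_def)
  next
    case True
    have "wedge (form_of_terms [(xs, c)]) (form_of_terms [(ys, d)]) K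
        = (\<Sum>I\<in>Pow K. (-1) ^ inv_count I (K - I) * (if set xs = I then c else 0)
             * (if set ys = K - I then d else 0))"
      using True by (simp add: wedge_def form_of_terms_def)
    also have "\<dots> = (\<Sum>I\<in>Pow K. if I = set xs
             then (-1) ^ inv_count I (K - I) * c * (if set ys = K - I then d else 0) else 0)"
      by (rule sum.cong) auto
    also have "\<dots> = (if set xs \<subseteq> K \<and> set ys = K - set xs
                      then (-1) ^ inv_count (set xs) (set ys) * c * d else 0)"
      using True by (simp add: sum.delta')
    also have "\<dots> = form_of_terms (wedge_term xs c ys d) K"
    proof (cases "set xs \<inter> set ys = {} \<and> K = set xs \<union> set ys")
      case True
      then show ?thesis
        using assms by (auto simp: form_of_terms_def wedge_term_def merge_sign_def inv_count_set)
    next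
      case False
      then have "\<not> (set xs \<subseteq> K \<and> set ys = K - set xs)"
        "set (sort (xs @ ys)) \<noteq> K \<or> set xs \<inter> set ys \<noteq> {}"
        by auto
      then show ?thesis
        by (auto simp: form_of_terms_def wedge_term_def)
    qed
    finally show ?thesis .
  qed
qed

lemma wedge_form_of_terms:
  assumes "list_all (\<lambda>p. distinct (fst p)) L1" "list_all (\<lambda>p. distinct (fst p)) L2"
  shows "wedge (form_of_terms L1) (form_of_terms L2) = form_of_terms (wedge_terms L1 L2)"
proof -
  have single: "wedge (form_of_terms [(xs, c)]) (form_of_terms L2)
      = form_of_terms (concat (map (\<lambda>(ys, d). wedge_term xs c ys d) L2))"
    if "distinct xs" "list_all (\<lambda>p. distinct (fst p)) L2" for xs c L2
    using that
  proof (induction L2)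
    case Nil
    then show ?case
      by (simp add: form_of_terms_Nil wedge_form_zero_right)
  next
    case (Cons p L2)
    then show ?case
      by (cases p) (simp add: form_of_terms_Cons[of _ L2] wedge_form_add_right
          wedge_single_terms form_of_terms_append)
  qed
  from assms show ?thesis
  proof (induction L1)
    case Nil
    then show ?case
      by (simp add: form_of_terms_Nil wedge_form_zero_left wedge_terms_def)
  next
    case (Cons p L1)
    then show ?case
      by (cases p) (simp add: form_of_terms_Cons[of _ L1] wedge_form_add_left single
          form_of_terms_append wedge_terms_def)
  qed
qed

lemma basis1_eq_form_of_terms: "basis1 i = form_of_terms [([i], 1)]"
  by (auto simp: basis1_def form_of_terms_def)

lemma form_unit_eq_form_of_terms: "form_unit = form_of_terms [([], 1)]"
  by (auto simp: form_unit_def form_of_terms_def)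

lemma form_scale_form_of_terms:
  "form_scale c (form_of_terms L) = form_of_terms (map (\<lambda>(xs, d). (xs, c * d)) L)"
  by (induction L) (auto simp: form_scale_def form_of_terms_def fun_eq_iff distrib_left)

lemma form_diff_form_of_terms:
  "form_diff (form_of_terms A) (form_of_terms B)
     = form_of_terms (A @ map (\<lambda>(xs, d). (xs, - d)) B)"
proof -
  have "form_of_terms (map (\<lambda>(xs, d). (xs, - d)) B) = form_scale (-1) (form_of_terms B)"
    by (simp add: form_scale_form_of_terms)
  then show ?thesis
    by (simp add: form_diff_def form_of_terms_append form_add_def form_scale_def fun_eq_iff)
qed

lemma complexify_form_of_terms:
  "complexify (form_of_terms L) = form_of_terms (map (\<lambda>(xs, d). (xs, complex_of_real d)) L)"
  by (induction L) (auto simp: complexify_def form_of_terms_def fun_eq_iff)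

lemma Re_form_form_of_terms:
  "Re_form (form_of_terms L) = form_of_terms (map (\<lambda>(xs, d). (xs, Re d)) L)"
  by (induction L) (auto simp: Re_form_def form_of_terms_def fun_eq_iff)

lemma ext_d_form_of_terms_Nil: "ext_d (form_of_terms []) = form_zero"
  by (simp add: ext_d_def form_of_terms_def form_zero_def)

lemma ext_d_form_of_terms_Cons:
  assumes "sorted xs" "distinct xs" "set xs \<subseteq> {0..<6}"
  shows "ext_d (form_of_terms ((xs, c) # L))
       = form_add (form_scale c (dmono xs)) (ext_d (form_of_terms L))"
proof
  fix K
  have "ext_d (form_of_terms ((xs, c) # L)) K
      = (\<Sum>I\<in>Pow {0..<6}. (if set xs = I then c else 0) * dmono (sorted_list_of_set I) K)
        + ext_d (form_of_terms L) K"
    by (simp add: ext_d_def form_of_terms_def distrib_right sum.distrib)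
  also have "(\<Sum>I\<in>Pow {0..<6}. (if set xs = I then c else 0) * dmono (sorted_list_of_set I) K)
      = (\<Sum>I\<in>Pow {0..<6}. if set xs = I then c * dmono (sorted_list_of_set I) K else 0)"
    by (rule sum.cong) auto
  also have "\<dots> = c * dmono (sorted_list_of_set (set xs)) K"
    using assms(3) by (simp add: sum.delta)
  also have "sorted_list_of_set (set xs) = xs"
    using assms(1,2) by (simp add: sorted_list_of_set.idem_if_sorted_distinct)
  finally show "ext_d (form_of_terms ((xs, c) # L)) K
      = form_add (form_scale c (dmono xs)) (ext_d (form_of_terms L)) K"
    by (simp add: form_add_def form_scale_def)
qed

lemma form_of_terms_at_sorted:
  assumes "list_all (\<lambda>(xs, _). sorted xs \<and> distinct xs) L" "sorted ks" "distinct ks"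
  shows "form_of_terms L (set ks) = term_coeff L ks"
  using assms
  by (induction L)
     (auto simp: form_of_terms_def term_coeff_def sorted_distinct_set_unique)

lemma form_of_terms_eq_iff:
  assumes L1: "list_all (\<lambda>(xs, _). sorted xs \<and> distinct xs) L1"
    and L2: "list_all (\<lambda>(xs, _). sorted xs \<and> distinct xs) L2"
  shows "form_of_terms L1 = form_of_terms L2
     \<longleftrightarrow> (\<forall>ks\<in>set (map fst L1 @ map fst L2). term_coeff L1 ks = term_coeff L2 ks)"
proof -
  have key_sorted: "sorted ks \<and> distinct ks" if "ks \<in> set (map fst L1 @ map fst L2)" for ks
    using that L1 L2 by (auto simp: list_all_iff)
  have off_keys: "form_of_terms L K = 0" if "\<forall>ks\<in>set (map fst L). set ks \<noteq> K" for L K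
    using that by (induction L) (simp_all add: form_of_terms_def split_def)
  show ?thesis
  proof
    assume "form_of_terms L1 = form_of_terms L2"
    then show "\<forall>ks\<in>set (map fst L1 @ map fst L2). term_coeff L1 ks = term_coeff L2 ks"
      using key_sorted form_of_terms_at_sorted[OF L1] form_of_terms_at_sorted[OF L2]
      by metis
  next
    assume coeffs: "\<forall>ks\<in>set (map fst L1 @ map fst L2). term_coeff L1 ks = term_coeff L2 ks"
    show "form_of_terms L1 = form_of_terms L2"
    proof
      fix K
      show "form_of_terms L1 K = form_of_terms L2 K"
      proof (cases "\<exists>ks\<in>set (map fst L1 @ map fst L2). set ks = K")
        case True
        then show ?thesis
          using coeffs key_sorted form_of_terms_at_sorted[OF L1] form_of_terms_at_sorted[OF L2]
          by metis
      next
        case False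
        then show ?thesis
          using off_keys[of L1 K] off_keys[of L2 K] by auto
      qed
    qed
  qed
qed

lemmas form_of_terms_eval =
  basis1_eq_form_of_terms form_unit_eq_form_of_terms form_of_terms_append[symmetric]
  form_scale_form_of_terms form_diff_form_of_terms complexify_form_of_terms
  Re_form_form_of_terms wedge_form_of_terms wedge_terms_def wedge_term_def merge_sign_def
  ext_d_form_of_terms_Cons ext_d_form_of_terms_Nil form_of_terms_Nil[symmetric]

text \<open>Equality of the coefficients of \<open>e\<^sub>i f\<^sub>i e\<^sub>j f\<^sub>j\<close> on the two sides (up to a common
  sign), \<open>m\<close> being the third index.\<close>
definition component_eq ::
    "real \<Rightarrow> real \<Rightarrow> real \<Rightarrow> real \<Rightarrow> real \<Rightarrow> real \<Rightarrow> real \<Rightarrow> real \<Rightarrow> real \<Rightarrow> bool" where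
  "component_eq lam a b \<mu> ci cj cm si sj \<longleftrightarrow>
     32*lam*(si*sj) - 2*lam^3*((a*ci + b)*(a*cj + b)) - 2*lam^3*(a*cm + b)
       = -16*\<mu>*lam^2*(si*sj)"

lemma nearly_half_flat_iff_component_eqs:
  "ext_d (Re_form (Xi lam a b t)) = form_scale (\<mu> / 2) (wedge (xi lam a b t) (xi lam a b t))
   \<longleftrightarrow> component_eq lam a b \<mu> (ck t 1) (ck t 2) (ck t 3) (sk t 1) (sk t 2)
     \<and> component_eq lam a b \<mu> (ck t 3) (ck t 1) (ck t 2) (sk t 3) (sk t 1)
     \<and> component_eq lam a b \<mu> (ck t 2) (ck t 3) (ck t 1) (sk t 2) (sk t 3)"
  apply (simp add: Xi_def Zk_def X_odd_def X_even_def xi_def e_k_def f_k_def dgen_def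
      form_of_terms_eval form_of_terms_eq_iff term_coeff_def)
  apply (simp add: component_eq_def power3_eq_cube power2_eq_square)
  apply (simp add: algebra_simps)
  by blast

lemma ck_sk_angles:
  "ck t 1 = cos t" "ck t 2 = cos (t + 2*pi/3)" "ck t 3 = cos (t + 4*pi/3)"
  "sk t 1 = sin t" "sk t 2 = sin (t + 2*pi/3)" "sk t 3 = sin (t + 4*pi/3)"
proof -
  have "2 * pi * (real 1 - 1) / 3 = 0" "2 * pi * (real 2 - 1) / 3 = 2*pi/3"
    "2 * pi * (real 3 - 1) / 3 = 4*pi/3"
    by simp_all
  then show "ck t 1 = cos t" "ck t 2 = cos (t + 2*pi/3)" "ck t 3 = cos (t + 4*pi/3)"
    "sk t 1 = sin t" "sk t 2 = sin (t + 2*pi/3)" "sk t 3 = sin (t + 4*pi/3)"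
    unfolding ck_def sk_def by simp_all
qed

lemma cos_add_thirds: "cos (w + 2*pi/3) + cos (w + 4*pi/3) = - cos w"
proof -
  have half_angles: "((w + 2*pi/3) + (w + 4*pi/3)) / 2 = w + pi"
    "((w + 2*pi/3) - (w + 4*pi/3)) / 2 = - (pi/3)"
    by (simp_all add: field_simps)
  show ?thesis
    unfolding cos_plus_cos half_angles by (simp add: cos_60)
qed

lemma cos_mult_cos_thirds: "cos (w + 2*pi/3) * cos (w + 4*pi/3) = (cos w)^2 - 3/4"
proof -
  have "(w + 2*pi/3) - (w + 4*pi/3) = - (2*pi/3)" "(w + 2*pi/3) + (w + 4*pi/3) = 2*w + 2*pi"
    by simp_all
  then show ?thesis
    unfolding cos_times_cos by (simp add: cos_120 cos_double_cos)
qed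

lemma sin_mult_sin_thirds: "sin (w + 2*pi/3) * sin (w + 4*pi/3) = 1/4 - (cos w)^2"
proof -
  have "(w + 2*pi/3) - (w + 4*pi/3) = - (2*pi/3)" "(w + 2*pi/3) + (w + 4*pi/3) = 2*w + 2*pi"
    by simp_all
  then show ?thesis
    unfolding sin_times_sin by (simp add: cos_120 cos_double_cos)
qed

text \<open>Here \<open>x\<close> stands for \<open>c\<^sub>m\<close>, and \<open>x\<^sup>2 - 1/4 = - s\<^sub>i s\<^sub>j\<close>.\<close>
definition nhf_defect :: "real \<Rightarrow> real \<Rightarrow> real \<Rightarrow> real \<Rightarrow> real \<Rightarrow> real" where
  "nhf_defect lam a b \<mu> x =
     (lam^2*a^2 + 8*lam*\<mu> + 16) * (x^2 - 1/4) + lam^2*(a*(1 - b)) * x + lam^2*(b^2 + b - a^2/2)"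

lemma component_eq_iff_nhf_defect:
  assumes "lam \<noteq> 0" "ci + cj = - cm" "ci * cj = cm^2 - 3/4" "si * sj = 1/4 - cm^2"
  shows "component_eq lam a b \<mu> ci cj cm si sj \<longleftrightarrow> nhf_defect lam a b \<mu> cm = 0"
proof -
  have "(a*ci + b)*(a*cj + b) = a^2*(ci*cj) + a*b*(ci + cj) + b^2"
    by (simp add: algebra_simps power2_eq_square)
  also have "\<dots> = a^2*(cm^2 - 3/4) - a*b*cm + b^2"
    using assms(2,3) by simp
  finally have product: "(a*ci + b)*(a*cj + b) = a^2*(cm^2 - 3/4) - a*b*cm + b^2" .
  have identity: "32*lam*(si*sj) - 2*lam^3*((a*ci + b)*(a*cj + b)) - 2*lam^3*(a*cm + b)
      + 16*\<mu>*lam^2*(si*sj) = -2*lam * nhf_defect lam a b \<mu> cm"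
    unfolding product assms(4) nhf_defect_def
    by (simp add: algebra_simps power2_eq_square power3_eq_cube)
  have "component_eq lam a b \<mu> ci cj cm si sj \<longleftrightarrow> -2*lam * nhf_defect lam a b \<mu> cm = 0"
    unfolding component_eq_def identity[symmetric] by argo
  with assms(1) show ?thesis
    by simp
qed

lemma nearly_half_flat_iff_nhf_defect:
  assumes "lam \<noteq> 0"
  shows "ext_d (Re_form (Xi lam a b t)) = form_scale (\<mu> / 2) (wedge (xi lam a b t) (xi lam a b t))
    \<longleftrightarrow> nhf_defect lam a b \<mu> (ck t 1) = 0 \<and> nhf_defect lam a b \<mu> (ck t 2) = 0
      \<and> nhf_defect lam a b \<mu> (ck t 3) = 0"
proof -
  have angles: "t + 4*pi/3 + 2*pi/3 = t + 2*pi" "t + 4*pi/3 + 4*pi/3 = t + 2*pi/3 + 2*pi"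
    "t + 2*pi/3 + 2*pi/3 = t + 4*pi/3" "t + 2*pi/3 + 4*pi/3 = t + 2*pi"
    by simp_all
  have shifted:
    "cos (t + 4*pi/3 + 2*pi/3) = ck t 1" "cos (t + 4*pi/3 + 4*pi/3) = ck t 2"
    "sin (t + 4*pi/3 + 2*pi/3) = sk t 1" "sin (t + 4*pi/3 + 4*pi/3) = sk t 2"
    "cos (t + 2*pi/3 + 2*pi/3) = ck t 3" "cos (t + 2*pi/3 + 4*pi/3) = ck t 1"
    "sin (t + 2*pi/3 + 2*pi/3) = sk t 3" "sin (t + 2*pi/3 + 4*pi/3) = sk t 1"
    unfolding angles ck_sk_angles by (simp_all only: cos_periodic sin_periodic)
  note thirds = cos_add_thirds cos_mult_cos_thirds sin_mult_sin_thirds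
  note component_eq_iff = component_eq_iff_nhf_defect[OF assms]
  note to_ck_sk = ck_sk_angles[of t, symmetric]
  have "component_eq lam a b \<mu> (ck t 1) (ck t 2) (ck t 3) (sk t 1) (sk t 2)
      \<longleftrightarrow> nhf_defect lam a b \<mu> (ck t 3) = 0"
    by (rule component_eq_iff[OF thirds[of "t + 4*pi/3", unfolded shifted to_ck_sk]])
  moreover have "component_eq lam a b \<mu> (ck t 3) (ck t 1) (ck t 2) (sk t 3) (sk t 1)
      \<longleftrightarrow> nhf_defect lam a b \<mu> (ck t 2) = 0"
    by (rule component_eq_iff[OF thirds[of "t + 2*pi/3", unfolded shifted to_ck_sk]])
  moreover have "component_eq lam a b \<mu> (ck t 2) (ck t 3) (ck t 1) (sk t 2) (sk t 3)
      \<longleftrightarrow> nhf_defect lam a b \<mu> (ck t 1) = 0"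
    by (rule component_eq_iff[OF thirds[of t, unfolded to_ck_sk]])
  ultimately show ?thesis
    unfolding nearly_half_flat_iff_component_eqs by blast
qed

lemma quadratic_vanishing_at_three_points:
  fixes p q r :: real
  assumes "\<forall>x\<in>{-1, 0, 1}. p * x^2 + q * x + r = 0"
  shows "p = 0 \<and> q = 0 \<and> r = 0"
proof -
  have "p + q + r = 0" "p - q + r = 0" "r = 0"
    using assms by auto
  then show ?thesis
    by linarith
qed

lemma nearly_half_flat_for_all_t_iff:
  assumes "lam \<noteq> 0"
  shows "(\<forall>t. ext_d (Re_form (Xi lam a b t))
               = form_scale (\<mu> / 2) (wedge (xi lam a b t) (xi lam a b t)))
    \<longleftrightarrow> lam^2*a^2 + 8*lam*\<mu> + 16 = 0 \<and> a*(1 - b) = 0 \<and> a^2 = 2*(b^2 + b)"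
    (is "(\<forall>t. ?nhf t) \<longleftrightarrow> ?coeffs")
proof
  define p where "p = lam^2*a^2 + 8*lam*\<mu> + 16"
  define q where "q = lam^2*(a*(1 - b))"
  define r where "r = lam^2*(b^2 + b - a^2/2) - p/4"
  have quadratic: "nhf_defect lam a b \<mu> x = p * x^2 + q * x + r" for x
    by (simp add: nhf_defect_def p_def q_def r_def algebra_simps)
  assume "\<forall>t. ?nhf t"
  then have "nhf_defect lam a b \<mu> (ck t 1) = 0" for t
    using nearly_half_flat_iff_nhf_defect[OF assms] by blast
  then have "nhf_defect lam a b \<mu> (cos t) = 0" for t
    unfolding ck_sk_angles .
  from this[of 0] this[of pi] this[of "pi/2"]
  have "p = 0 \<and> q = 0 \<and> r = 0"
    by (intro quadratic_vanishing_at_three_points) (simp add: quadratic)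
  then have "p = 0" "lam^2 * (a*(1 - b)) = 0" "lam^2 * (b^2 + b - a^2/2) = 0"
    unfolding q_def r_def by auto
  with assms show ?coeffs
    unfolding p_def by auto
next
  assume ?coeffs
  then have "lam^2*a^2 + 8*lam*\<mu> + 16 = 0" "a*(1 - b) = 0" "b^2 + b - a^2/2 = 0"
    by auto
  then have "nhf_defect lam a b \<mu> x = 0" for x
    unfolding nhf_defect_def by (simp only: mult_zero_left mult_zero_right add_0)
  then show "\<forall>t. ?nhf t"
    using nearly_half_flat_iff_nhf_defect[OF assms] by simp
qed

lemma nhf_coefficient_conditions_iff:
  fixes lam a b \<mu> :: real
  assumes "lam \<noteq> 0"
  shows "lam^2*a^2 + 8*lam*\<mu> + 16 = 0 \<and> a*(1 - b) = 0 \<and> a^2 = 2*(b^2 + b)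
    \<longleftrightarrow> (a = 0 \<and> (b = -1 \<or> b = 0) \<and> \<mu> = -2 / lam)
      \<or> ((a = 2 \<or> a = -2) \<and> b = 1 \<and> \<mu> = -(lam^2 + 4) / (2 * lam))"
proof -
  have "a*(1 - b) = 0 \<and> a^2 = 2*(b^2 + b) \<longleftrightarrow> a = 0 \<and> b*(b + 1) = 0 \<or> b = 1 \<and> a^2 = 4"
    by (auto simp: algebra_simps power2_eq_square)
  also have "\<dots> \<longleftrightarrow> a = 0 \<and> (b = -1 \<or> b = 0) \<or> b = 1 \<and> (a = 2 \<or> a = -2)"
    using power2_eq_iff[of a 2] by (auto simp: add_eq_0_iff2)
  finally have ab: "a*(1 - b) = 0 \<and> a^2 = 2*(b^2 + b)
      \<longleftrightarrow> a = 0 \<and> (b = -1 \<or> b = 0) \<or> b = 1 \<and> (a = 2 \<or> a = -2)" .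
  have "lam^2*a^2 + 8*lam*\<mu> + 16 = 0 \<longleftrightarrow> \<mu> = -(lam^2*a^2 + 16) / (8*lam)"
    using assms by (auto simp: field_simps)
  with ab assms show ?thesis
    by (auto simp: field_simps)
qed

theorem proposition5p1:
  fixes lam a b :: real
  assumes "lam \<noteq> 0"
  shows "((\<exists>\<mu>. \<forall>t. ext_d (Re_form (Xi lam a b t))
                  = form_scale (\<mu> / 2) (wedge (xi lam a b t) (xi lam a b t)))
          \<longleftrightarrow> ((a = 0 \<and> (b = -1 \<or> b = 0)) \<or> ((a = 2 \<or> a = -2) \<and> b = 1)))
       \<and> (\<forall>\<mu>. (\<forall>t. ext_d (Re_form (Xi lam a b t))
                  = form_scale (\<mu> / 2) (wedge (xi lam a b t) (xi lam a b t)))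
          \<longrightarrow> (a = 0 \<and> (b = -1 \<or> b = 0) \<and> \<mu> = -2 / lam)
            \<or> ((a = 2 \<or> a = -2) \<and> b = 1 \<and> \<mu> = -(lam^2 + 4) / (2 * lam)))"
  using nearly_half_flat_for_all_t_iff[OF assms] nhf_coefficient_conditions_iff[OF assms]
  by auto

end
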